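(* Suppose that each of the equations $\partial_{\overline z}W=aW+b\overline W$ and $\partial_{\overline z}V=-aV-\overline b\,\overline V$ possesses a Cauchy kernel in $\mathbb C_j$ behaving like $\mathcal O(|z|^{-1})$ as $z\to\infty$. Then such Cauchy kernels are unique (for each of the two equations there is only one Cauchy kernel in $\mathbb C_j$ behaving like $\mathcal O(|z|^{-1})$ as $z\to\infty$).
   Context: Bicomplex numbers: $i,j$ imaginary units, $i^2=j^2=-1$, $ij=ji$; $\mathbb C_i=\{a+ib\}$, $\mathbb C_j=\{a+jb\}$ ($a,b$ real); $\mathbb B=\{u+jv:u,v\in\mathbb C_i\}$, $\overline{u+jv}=u-jv$. Plane $=\mathbb C_j$, $z=x+jy$, $\partial_{\overline z}=\frac12(\partial_x+j\partial_y)$. Norm: with $W^\pm=\operatorname{Sc}W\mp i\operatorname{Vec}W$, $|W|=\frac12(|W^+|+|W^-|)$; $\mathcal O(|z|^{-1})$ means $|z||Z(z)|$ bounded for large $|z|$. Setting: $a,b$ are $\mathbb B$-valued Hölder continuous functions on $\mathbb C_j$; solutions are $\mathbb B$-valued functions with continuous first partials satisfying the equation. A Cauchy kernel in $\mathbb C_j$ is a family $Z^{(-1)}(1,z_0,z)$, $Z^{(-1)}(j,z_0,z)$, $z_0\in\mathbb C_j$, both solutions in $z\ne z_0$, with $\lim_{z\to z_0}(z-z_0)Z^{(-1)}(\alpha,z_0,z)=\alpha$, $\alpha=1,j$. *)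

theory Defs
  imports "HOL-Analysis.Analysis"
begin

text \<open>Bicomplex numbers \<open>u + j v\<close> (\<open>u, v \<in> C_i\<close>) are represented as pairs \<open>(u, v) :: complex \<times> complex\<close>;
  the first HOL complex type plays the role of \<open>C_i\<close>.
  The plane \<open>C_j\<close>, \<open>z = x + j y\<close>, is represented by the HOL type complex, \<open>z = Complex x y\<close>.\<close>

type_synonym bicomplex = "complex \<times> complex"

definition bmult :: "bicomplex \<Rightarrow> bicomplex \<Rightarrow> bicomplex" where
  "bmult W V = (fst W * fst V - snd W * snd V, fst W * snd V + snd W * fst V)"

definition bj :: bicomplex where
  "bj = (0, 1)"

definition bone :: bicomplex where
  "bone = (1, 0)"

definition bcnj :: "bicomplex \<Rightarrow> bicomplex" where
  "bcnj W = (fst W, - snd W)"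

definition bemb :: "complex \<Rightarrow> bicomplex" where
  "bemb z = (complex_of_real (Re z), complex_of_real (Im z))"

text \<open>The norm of the paper: \<open>W^\<pm> = Sc W \<mp> i Vec W\<close>, \<open>|W| = (|W^+| + |W^-|)/2\<close>.\<close>
definition bnorm :: "bicomplex \<Rightarrow> real" where
  "bnorm W = (cmod (fst W - \<i> * snd W) + cmod (fst W + \<i> * snd W)) / 2"

definition hoelder_continuous :: "(complex \<Rightarrow> bicomplex) \<Rightarrow> bool" where
  "hoelder_continuous f \<longleftrightarrow>
     (\<forall>r>0. \<exists>\<alpha> C. 0 < \<alpha> \<and> \<alpha> \<le> 1 \<and>
        (\<forall>z\<in>cball 0 r. \<forall>w\<in>cball 0 r. bnorm (f z - f w) \<le> C * cmod (z - w) powr \<alpha>))"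

definition has_cont_partials ::
  "(complex \<Rightarrow> bicomplex) \<Rightarrow> (complex \<Rightarrow> bicomplex) \<Rightarrow> (complex \<Rightarrow> bicomplex) \<Rightarrow> complex set \<Rightarrow> bool" where
  "has_cont_partials W Wx Wy S \<longleftrightarrow>
     (\<forall>z\<in>S. ((\<lambda>t::real. W (z + complex_of_real t)) has_vector_derivative Wx z) (at 0) \<and>
            ((\<lambda>t::real. W (z + \<i> * complex_of_real t)) has_vector_derivative Wy z) (at 0)) \<and>
     continuous_on S Wx \<and> continuous_on S Wy"

text \<open>\<open>W\<close> is a solution of \<open>\<partial>_{\<bar>z} W = a W + b \<bar>W\<close> on the open set \<open>S\<close>,
  where \<open>\<partial>_{\<bar>z} = (\<partial>_x + j \<partial>_y)/2\<close>.\<close>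
definition is_solution ::
  "(complex \<Rightarrow> bicomplex) \<Rightarrow> (complex \<Rightarrow> bicomplex) \<Rightarrow> (complex \<Rightarrow> bicomplex) \<Rightarrow> complex set \<Rightarrow> bool" where
  "is_solution a b W S \<longleftrightarrow>
     (\<exists>Wx Wy. has_cont_partials W Wx Wy S \<and>
        (\<forall>z\<in>S. (1/2::real) *\<^sub>R (Wx z + bmult bj (Wy z)) = bmult (a z) (W z) + bmult (b z) (bcnj (W z))))"

text \<open>A Cauchy kernel in \<open>C_j\<close>: \<open>Z1 z0 z = Z^{(-1)}(1,z0,z)\<close>, \<open>Zj z0 z = Z^{(-1)}(j,z0,z)\<close>.\<close>
definition cauchy_kernel ::
  "(complex \<Rightarrow> bicomplex) \<Rightarrow> (complex \<Rightarrow> bicomplex) \<Rightarrow>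
   (complex \<Rightarrow> complex \<Rightarrow> bicomplex) \<Rightarrow> (complex \<Rightarrow> complex \<Rightarrow> bicomplex) \<Rightarrow> bool" where
  "cauchy_kernel a b Z1 Zj \<longleftrightarrow>
     (\<forall>z0. is_solution a b (Z1 z0) (- {z0}) \<and> is_solution a b (Zj z0) (- {z0}) \<and>
        ((\<lambda>z. bmult (bemb (z - z0)) (Z1 z0 z)) \<longlongrightarrow> bone) (at z0) \<and>
        ((\<lambda>z. bmult (bemb (z - z0)) (Zj z0 z)) \<longlongrightarrow> bj) (at z0))"

definition big_O_inv :: "(complex \<Rightarrow> bicomplex) \<Rightarrow> bool" where
  "big_O_inv Z \<longleftrightarrow> (\<exists>R M. \<forall>z. R \<le> cmod z \<longrightarrow> cmod z * bnorm (Z z) \<le> M)"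

definition decaying_kernel ::
  "(complex \<Rightarrow> bicomplex) \<Rightarrow> (complex \<Rightarrow> bicomplex) \<Rightarrow>
   (complex \<Rightarrow> complex \<Rightarrow> bicomplex) \<Rightarrow> (complex \<Rightarrow> complex \<Rightarrow> bicomplex) \<Rightarrow> bool" where
  "decaying_kernel a b Z1 Zj \<longleftrightarrow>
     cauchy_kernel a b Z1 Zj \<and> (\<forall>z0. big_O_inv (Z1 z0) \<and> big_O_inv (Zj z0))"

end

theory Submission
  imports Defs
begin

text \<open>Let \<open>K, K'\<close> be two decaying kernels of the same equation with pole \<open>z\<^sub>0\<close> and residue
  \<open>\<beta> \<in> {1, j}\<close>. Then \<open>D = K - K'\<close> solves the equation off \<open>z\<^sub>0\<close>, is \<open>o(|z - z\<^sub>0|\<^sup>-\<^sup>1)\<close> at \<open>z\<^sub>0\<close>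
  and \<open>O(|z|\<^sup>-\<^sup>1)\<close> at infinity. Take a decaying kernel \<open>V\<close> of the adjoint equation with pole
  \<open>z\<^sub>1 \<noteq> z\<^sub>0\<close> and residue \<open>\<alpha> \<in> {1, j}\<close>. The \<open>j\<close>-part of \<open>D V dz\<close> is a closed form, so by Green's
  theorem on rectangles its integral over a large square is the sum of its integrals over small
  squares around \<open>z\<^sub>0\<close> and \<open>z\<^sub>1\<close>. As the small squares shrink and the large one grows, the
  integrals around \<open>z\<^sub>0\<close> and over the large square tend to \<open>0\<close>, while the one around \<open>z\<^sub>1\<close> tends to
  \<open>2\<pi>\<close> times the \<open>C_i\<close>-component of \<open>D(z\<^sub>1) \<alpha>\<close>. Both choices of \<open>\<alpha>\<close> give \<open>D(z\<^sub>1) = 0\<close>.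
  Since the adjoint of the adjoint equation is the original one, this applies to both equations.\<close>

section \<open>Bicomplex arithmetic\<close>

lemma bmult_commute: "bmult x y = bmult y x"
  by (simp add: bmult_def algebra_simps)

lemma bmult_assoc: "bmult (bmult x y) z = bmult x (bmult y z)"
  by (simp add: bmult_def algebra_simps)

lemma bmult_bone_left [simp]: "bmult bone x = x"
  by (simp add: bmult_def bone_def)

lemma bcnj_diff: "bcnj (x - y) = bcnj x - bcnj y"
  by (simp add: bcnj_def)

lemma norm_fst_le_norm: "norm (fst x) \<le> norm x"
  by (metis norm_fst_le prod.collapse)

lemma norm_snd_le_norm: "norm (snd x) \<le> norm x"
  by (metis norm_snd_le prod.collapse)

lemma norm_bmult_le: "norm (bmult x y) \<le> 4 * norm x * norm y"
proof -
  have "norm (fst x) * norm (fst y) \<le> norm x * norm y" "norm (snd x) * norm (snd y) \<le> norm x * norm y"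
       "norm (fst x) * norm (snd y) \<le> norm x * norm y" "norm (snd x) * norm (fst y) \<le> norm x * norm y"
    by (intro mult_mono norm_fst_le_norm norm_snd_le_norm norm_ge_zero)+
  moreover have "norm (bmult x y) \<le> norm (fst x * fst y - snd x * snd y) +
      norm (fst x * snd y + snd x * fst y)"
    unfolding bmult_def by (rule norm_Pair_le)
  moreover have "norm (fst x * fst y - snd x * snd y) \<le> norm (fst x) * norm (fst y) +
      norm (snd x) * norm (snd y)"
    "norm (fst x * snd y + snd x * fst y) \<le> norm (fst x) * norm (snd y) + norm (snd x) * norm (fst y)"
    by (metis norm_mult norm_triangle_ineq4, metis norm_mult norm_triangle_ineq)
  ultimately show ?thesis by linarith
qed

interpretation bmult: bounded_bilinear bmult
proof
  show "\<exists>K. \<forall>x y. norm (bmult x y) \<le> norm x * norm y * K"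
    using norm_bmult_le by (metis mult.commute mult.left_commute)
qed (simp_all add: bmult_def algebra_simps scaleR_conv_of_real)

lemma norm_bemb [simp]: "norm (bemb z) = cmod z"
  by (simp add: bemb_def norm_Pair cmod_def)

lemma bmult_bemb_bemb: "bmult (bemb z) (bemb w) = bemb (z * w)"
  by (simp add: bmult_def bemb_def algebra_simps)

lemma bmult_bemb_inverse_cancel: "z \<noteq> 0 \<Longrightarrow> bmult (bemb (inverse z)) (bmult (bemb z) x) = x"
proof -
  assume "z \<noteq> 0"
  then have "bmult (bemb (inverse z)) (bemb z) = bone"
    by (simp add: bmult_bemb_bemb) (simp add: bemb_def bone_def)
  then show ?thesis by (simp flip: bmult_assoc)
qed

lemma cmod_mult_norm_le_norm_bmult_bemb: "cmod w * norm x \<le> 4 * norm (bmult (bemb w) x)"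
proof (cases "w = 0")
  case False
  have "norm x = norm (bmult (bemb (inverse w)) (bmult (bemb w) x))"
    using False by (simp add: bmult_bemb_inverse_cancel)
  also have "\<dots> \<le> 4 * norm (bmult (bemb w) x) / cmod w"
    using norm_bmult_le[of "bemb (inverse w)" "bmult (bemb w) x"]
    by (simp add: norm_inverse divide_inverse mult_ac)
  finally show ?thesis using False by (simp add: field_simps)
qed simp

lemma norm_le_bnorm: "norm x \<le> 2 * bnorm x"
proof -
  obtain u v where x: "x = (u, v)" by fastforce
  have "2 * cmod u \<le> cmod (u - \<i> * v) + cmod (u + \<i> * v)"
    using norm_triangle_ineq[of "u - \<i> * v" "u + \<i> * v"] by (simp add: norm_mult)
  moreover have "2 * cmod v \<le> cmod (u - \<i> * v) + cmod (u + \<i> * v)"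
    using norm_triangle_ineq4[of "u + \<i> * v" "u - \<i> * v"] by (simp add: norm_mult)
  ultimately show ?thesis using norm_Pair_le[of u v] by (simp add: bnorm_def x)
qed

lemma continuous_on_bemb: "continuous_on S bemb"
  unfolding bemb_def by (intro continuous_intros)

lemma cmod_mult_norm_bmult_le: "cmod w * norm (bmult x y) \<le> 16 * norm x * norm (bmult (bemb w) y)"
proof -
  have "cmod w * norm (bmult x y) \<le> cmod w * (4 * norm x * norm y)"
    by (intro mult_left_mono norm_bmult_le) simp
  also have "\<dots> = 4 * norm x * (cmod w * norm y)"
    by (simp add: mult_ac)
  also have "\<dots> \<le> 4 * norm x * (4 * norm (bmult (bemb w) y))"
    by (intro mult_left_mono cmod_mult_norm_le_norm_bmult_bemb) simp
  finally show ?thesis by simp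
qed

lemma cmod_mult_norm_bmult_bemb_inverse_le: "cmod w * norm (bmult (bemb (inverse w)) y) \<le> 4 * norm y"
proof (cases "w = 0")
  case False
  then have "bmult (bemb w) (bmult (bemb (inverse w)) y) = y"
    using bmult_bemb_inverse_cancel[of "inverse w"] by simp
  then show ?thesis
    using cmod_mult_norm_le_norm_bmult_bemb[of w "bmult (bemb (inverse w)) y"] by simp
qed simp

definition cont_partials ::
  "(complex \<Rightarrow> 'b::real_normed_vector) \<Rightarrow> (complex \<Rightarrow> 'b) \<Rightarrow> (complex \<Rightarrow> 'b) \<Rightarrow> complex set \<Rightarrow> bool" where
  "cont_partials F Fx Fy S \<longleftrightarrow>
     (\<forall>z\<in>S. ((\<lambda>t::real. F (z + complex_of_real t)) has_vector_derivative Fx z) (at 0) \<and>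
            ((\<lambda>t::real. F (z + \<i> * complex_of_real t)) has_vector_derivative Fy z) (at 0)) \<and>
     continuous_on S Fx \<and> continuous_on S Fy"

lemma has_cont_partials_iff_cont_partials: "has_cont_partials F Fx Fy S \<longleftrightarrow> cont_partials F Fx Fy S"
  by (simp add: has_cont_partials_def cont_partials_def)

lemma cont_partials_subset: "cont_partials F Fx Fy S \<Longrightarrow> T \<subseteq> S \<Longrightarrow> cont_partials F Fx Fy T"
  unfolding cont_partials_def by (auto intro: continuous_on_subset)

lemma cont_partials_diff:
  "cont_partials F Fx Fy S \<Longrightarrow> cont_partials G Gx Gy S \<Longrightarrow>
    cont_partials (\<lambda>z. F z - G z) (\<lambda>z. Fx z - Gx z) (\<lambda>z. Fy z - Gy z) S"
  unfolding cont_partials_def by (auto intro!: has_vector_derivative_diff continuous_on_diff)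

lemma cont_partials_bounded_linear:
  "bounded_linear f \<Longrightarrow> cont_partials F Fx Fy S \<Longrightarrow>
    cont_partials (\<lambda>z. f (F z)) (\<lambda>z. f (Fx z)) (\<lambda>z. f (Fy z)) S"
  unfolding cont_partials_def
  by (auto intro: bounded_linear.has_vector_derivative continuous_on_compose2[OF linear_continuous_on])

lemma cont_partials_bmult:
  assumes "cont_partials F Fx Fy S" "cont_partials G Gx Gy S" "continuous_on S F" "continuous_on S G"
  shows "cont_partials (\<lambda>z. bmult (F z) (G z)) (\<lambda>z. bmult (F z) (Gx z) + bmult (Fx z) (G z))
           (\<lambda>z. bmult (F z) (Gy z) + bmult (Fy z) (G z)) S"
  unfolding cont_partials_def
proof (intro conjI ballI)
  fix z assume "z \<in> S"
  then have "((\<lambda>t::real. F (z + complex_of_real t)) has_vector_derivative Fx z) (at 0)"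
    "((\<lambda>t::real. G (z + complex_of_real t)) has_vector_derivative Gx z) (at 0)"
    "((\<lambda>t::real. F (z + \<i> * complex_of_real t)) has_vector_derivative Fy z) (at 0)"
    "((\<lambda>t::real. G (z + \<i> * complex_of_real t)) has_vector_derivative Gy z) (at 0)"
    using assms(1,2) unfolding cont_partials_def by auto
  from bmult.has_vector_derivative[OF this(1,2)] bmult.has_vector_derivative[OF this(3,4)]
  show "((\<lambda>t. bmult (F (z + complex_of_real t)) (G (z + complex_of_real t))) has_vector_derivative
          bmult (F z) (Gx z) + bmult (Fx z) (G z)) (at 0)"
    and "((\<lambda>t. bmult (F (z + \<i> * complex_of_real t)) (G (z + \<i> * complex_of_real t))) has_vector_derivative
          bmult (F z) (Gy z) + bmult (Fy z) (G z)) (at 0)"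
    by simp_all
qed (use assms in \<open>auto simp: cont_partials_def intro!: continuous_on_add bmult.continuous_on\<close>)

lemma cont_partials_hline_derivative:
  assumes "cont_partials F Fx Fy S" "Complex x y \<in> S"
  shows "((\<lambda>t. F (Complex t y)) has_vector_derivative Fx (Complex x y)) (at x)"
proof -
  have "((\<lambda>t. F (Complex x y + complex_of_real t)) has_vector_derivative Fx (Complex x y)) (at 0)"
    using assms unfolding cont_partials_def by blast
  moreover have "((\<lambda>t. t - x) has_vector_derivative 1) (at x)"
    by (auto intro!: derivative_eq_intros)
  ultimately have "((\<lambda>t. F (Complex x y + complex_of_real (t - x))) has_vector_derivative Fx (Complex x y)) (at x)"
    using vector_diff_chain_at by (fastforce simp: o_def)
  moreover have "Complex x y + complex_of_real (t - x) = Complex t y" for t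
    by (simp add: complex_eq_iff)
  ultimately show ?thesis by simp
qed

lemma cont_partials_vline_derivative:
  assumes "cont_partials F Fx Fy S" "Complex x y \<in> S"
  shows "((\<lambda>t. F (Complex x t)) has_vector_derivative Fy (Complex x y)) (at y)"
proof -
  have "((\<lambda>t. F (Complex x y + \<i> * complex_of_real t)) has_vector_derivative Fy (Complex x y)) (at 0)"
    using assms unfolding cont_partials_def by blast
  moreover have "((\<lambda>t. t - y) has_vector_derivative 1) (at y)"
    by (auto intro!: derivative_eq_intros)
  ultimately have "((\<lambda>t. F (Complex x y + \<i> * complex_of_real (t - y))) has_vector_derivative Fy (Complex x y)) (at y)"
    using vector_diff_chain_at by (fastforce simp: o_def)
  moreover have "Complex x y + \<i> * complex_of_real (t - y) = Complex x t" for t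
    by (simp add: complex_eq_iff)
  ultimately show ?thesis by simp
qed

lemma norm_diff_le_of_vector_derivative_bound:
  fixes g :: "real \<Rightarrow> 'b::banach"
  assumes deriv: "\<And>t. t \<in> {min a b..max a b} \<Longrightarrow> (g has_vector_derivative g' t) (at t)"
    and bound: "\<And>t. t \<in> {min a b..max a b} \<Longrightarrow> norm (g' t) \<le> K"
  shows "norm (g b - g a) \<le> K * \<bar>b - a\<bar>"
proof -
  have K: "0 \<le> K"
    using bound[of a] by (simp add: order.trans[OF norm_ge_zero])
  have *: "norm (g v - g u) \<le> K * (v - u)" if "u \<le> v" and uv: "{u..v} = {min a b..max a b}" for u v
  proof -
    have int: "(g' has_integral (g v - g u)) (cbox u v)"
      unfolding cbox_interval using \<open>u \<le> v\<close>
      by (intro fundamental_theorem_of_calculus) (simp_all add: uv has_vector_derivative_at_within deriv)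
    have "\<And>t. t \<in> cbox u v \<Longrightarrow> norm (g' t) \<le> K"
      using bound by (simp add: uv)
    from has_integral_bound[OF K int this] show ?thesis
      using \<open>u \<le> v\<close> by simp
  qed
  show ?thesis
  proof (cases "a \<le> b")
    case True
    then show ?thesis using *[of a b] by simp
  next
    case False
    then show ?thesis using *[of b a] by (simp add: norm_minus_commute)
  qed
qed

lemma cont_partials_imp_continuous:
  fixes F :: "complex \<Rightarrow> 'b::banach"
  assumes F: "cont_partials F Fx Fy S" and "open S"
  shows "continuous_on S F"
proof (rule continuous_at_imp_continuous_on, rule ballI)
  fix z0 assume "z0 \<in> S"
  then obtain e where e: "e > 0" "cball z0 e \<subseteq> S"
    using \<open>open S\<close> open_contains_cball by blast
  have "compact (Fx ` cball z0 e)"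
    using F e by (intro compact_continuous_image) (auto simp: cont_partials_def intro: continuous_on_subset)
  then obtain K where K: "\<And>z. z \<in> cball z0 e \<Longrightarrow> norm (Fx z) \<le> K"
    by (meson compact_imp_bounded bounded_iff imageI)
  define v where "v z = Complex (Re z0) (Im z)" for z
  have horizontal: "norm (F z - F (v z)) \<le> K * \<bar>Re z - Re z0\<bar>" if z: "z \<in> ball z0 e" for z
  proof -
    have inball: "Complex t (Im z) \<in> cball z0 e" if "t \<in> {min (Re z0) (Re z)..max (Re z0) (Re z)}" for t
    proof -
      have "dist z0 (Complex t (Im z)) \<le> dist z0 z"
        using that by (auto simp: dist_norm cmod_def abs_le_square_iff[symmetric] intro!: real_sqrt_le_mono)
      then show ?thesis using z by simp
    qed
    have "norm (F (Complex (Re z) (Im z)) - F (Complex (Re z0) (Im z))) \<le> K * \<bar>Re z - Re z0\<bar>"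
    proof (rule norm_diff_le_of_vector_derivative_bound)
      fix t assume "t \<in> {min (Re z0) (Re z)..max (Re z0) (Re z)}"
      then have "Complex t (Im z) \<in> cball z0 e" by (rule inball)
      then show "((\<lambda>t. F (Complex t (Im z))) has_vector_derivative Fx (Complex t (Im z))) (at t)"
        and "norm (Fx (Complex t (Im z))) \<le> K"
        using e(2) K by (auto intro: cont_partials_hline_derivative[OF F])
    qed
    then show ?thesis by (simp add: v_def)
  qed
  have "((\<lambda>z. F z - F (v z)) \<longlongrightarrow> 0) (at z0)"
  proof (rule Lim_null_comparison)
    show "\<forall>\<^sub>F z in at z0. norm (F z - F (v z)) \<le> K * \<bar>Re z - Re z0\<bar>"
      using horizontal e(1) by (auto simp: eventually_at dist_commute)
    show "((\<lambda>z. K * \<bar>Re z - Re z0\<bar>) \<longlongrightarrow> 0) (at z0)"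
      by (auto intro!: tendsto_eq_intros)
  qed
  moreover have "isCont (\<lambda>z. F (v z)) z0"
    unfolding v_def using cont_partials_vline_derivative[OF F, of "Re z0" "Im z0"] \<open>z0 \<in> S\<close>
    by (intro isCont_o2[where f = Im and g = "\<lambda>y. F (Complex (Re z0) y)"])
       (auto intro: has_vector_derivative_continuous)
  ultimately have "((\<lambda>z. (F z - F (v z)) + F (v z)) \<longlongrightarrow> 0 + F (v z0)) (at z0)"
    unfolding isCont_def by (rule tendsto_add)
  then show "isCont F z0"
    by (simp add: isCont_def v_def)
qed

section \<open>Line integrals over the boundaries of rectangles\<close>

definition hline_integral :: "(complex \<Rightarrow> 'b::banach) \<Rightarrow> real \<Rightarrow> real \<Rightarrow> real \<Rightarrow> 'b" where
  "hline_integral P y a b = integral {a..b} (\<lambda>x. P (Complex x y))"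

definition vline_integral :: "(complex \<Rightarrow> 'b::banach) \<Rightarrow> real \<Rightarrow> real \<Rightarrow> real \<Rightarrow> 'b" where
  "vline_integral Q x c d = integral {c..d} (\<lambda>y. Q (Complex x y))"

text \<open>The integral of \<open>P dx + Q dy\<close> over the positively oriented boundary of \<open>[a, b] \<times> [c, d]\<close>.\<close>
definition boundary_integral ::
  "(complex \<Rightarrow> 'b::banach) \<Rightarrow> (complex \<Rightarrow> 'b) \<Rightarrow> real \<Rightarrow> real \<Rightarrow> real \<Rightarrow> real \<Rightarrow> 'b" where
  "boundary_integral P Q a b c d =
     hline_integral P c a b + vline_integral Q b c d - hline_integral P d a b - vline_integral Q a c d"

definition closed_form_on :: "(complex \<Rightarrow> 'b::real_normed_vector) \<Rightarrow> (complex \<Rightarrow> 'b) \<Rightarrow> complex set \<Rightarrow> bool" where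
  "closed_form_on P Q U \<longleftrightarrow> open U \<and>
     (\<exists>Px Py Qx Qy. cont_partials P Px Py U \<and> cont_partials Q Qx Qy U \<and> (\<forall>z\<in>U. Py z = Qx z))"

lemma closed_form_on_continuous:
  fixes P :: "complex \<Rightarrow> 'b::banach"
  assumes "closed_form_on P Q U"
  shows "continuous_on U P" "continuous_on U Q"
  using assms cont_partials_imp_continuous unfolding closed_form_on_def by blast+

lemma hline_integrable:
  fixes P :: "complex \<Rightarrow> 'b::banach"
  assumes "continuous_on S P" "\<And>x. x \<in> {a..b} \<Longrightarrow> Complex x y \<in> S"
  shows "(\<lambda>x. P (Complex x y)) integrable_on {a..b}"
proof -
  have "continuous_on {a..b} (\<lambda>x. Complex x y)"
    unfolding Complex_eq by (intro continuous_intros)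
  then show ?thesis
    using assms by (intro integrable_continuous_real continuous_on_compose2[OF assms(1)]) auto
qed

lemma vline_integrable:
  fixes Q :: "complex \<Rightarrow> 'b::banach"
  assumes "continuous_on S Q" "\<And>y. y \<in> {c..d} \<Longrightarrow> Complex x y \<in> S"
  shows "(\<lambda>y. Q (Complex x y)) integrable_on {c..d}"
proof -
  have "continuous_on {c..d} (\<lambda>y. Complex x y)"
    unfolding Complex_eq by (intro continuous_intros)
  then show ?thesis
    using assms by (intro integrable_continuous_real continuous_on_compose2[OF assms(1)]) auto
qed

lemma norm_integral_le_const:
  fixes f :: "real \<Rightarrow> 'b::banach"
  assumes "a \<le> b" "\<And>x. x \<in> {a..b} \<Longrightarrow> norm (f x) \<le> K"
  shows "norm (integral {a..b} f) \<le> K * (b - a)"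
proof -
  have K: "0 \<le> K"
    using assms order.trans[OF norm_ge_zero] by auto
  show ?thesis
  proof (cases "f integrable_on {a..b}")
    case True
    then have "(f has_integral integral {a..b} f) (cbox a b)"
      by (simp add: integrable_integral)
    from has_integral_bound[OF K this] show ?thesis
      using assms by simp
  qed (use K assms(1) in \<open>simp add: not_integrable_integral\<close>)
qed

lemma boundary_integral_split_x:
  fixes P :: "complex \<Rightarrow> 'b::banach"
  assumes "continuous_on U P" "\<And>x. x \<in> {a..b} \<Longrightarrow> Complex x c \<in> U \<and> Complex x d \<in> U"
    and "a \<le> m" "m \<le> b"
  shows "boundary_integral P Q a b c d = boundary_integral P Q a m c d + boundary_integral P Q m b c d"
proof -
  have "hline_integral P y a m + hline_integral P y m b = hline_integral P y a b"
    if "y = c \<or> y = d" for y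
    unfolding hline_integral_def using assms that
    by (intro Henstock_Kurzweil_Integration.integral_combine hline_integrable[OF assms(1)]) auto
  from this[of c] this[of d] show ?thesis
    unfolding boundary_integral_def by (simp add: algebra_simps)
qed

lemma boundary_integral_split_y:
  fixes Q :: "complex \<Rightarrow> 'b::banach"
  assumes "continuous_on U Q" "\<And>y. y \<in> {c..d} \<Longrightarrow> Complex a y \<in> U \<and> Complex b y \<in> U"
    and "c \<le> m" "m \<le> d"
  shows "boundary_integral P Q a b c d = boundary_integral P Q a b c m + boundary_integral P Q a b m d"
proof -
  have "vline_integral Q x c m + vline_integral Q x m d = vline_integral Q x c d"
    if "x = a \<or> x = b" for x
    unfolding vline_integral_def using assms that
    by (intro Henstock_Kurzweil_Integration.integral_combine vline_integrable[OF assms(1)]) auto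
  from this[of a] this[of b] show ?thesis
    unfolding boundary_integral_def by (simp add: algebra_simps)
qed

lemma boundary_integral_diff:
  fixes P :: "complex \<Rightarrow> 'b::banach"
  assumes "continuous_on S P" "continuous_on S Q" "continuous_on S P'" "continuous_on S Q'"
    and "\<And>x. x \<in> {a..b} \<Longrightarrow> Complex x c \<in> S \<and> Complex x d \<in> S"
    and "\<And>y. y \<in> {c..d} \<Longrightarrow> Complex a y \<in> S \<and> Complex b y \<in> S"
  shows "boundary_integral (\<lambda>z. P z - P' z) (\<lambda>z. Q z - Q' z) a b c d =
    boundary_integral P Q a b c d - boundary_integral P' Q' a b c d"
proof -
  have "hline_integral (\<lambda>z. P z - P' z) y a b = hline_integral P y a b - hline_integral P' y a b"
    if "y = c \<or> y = d" for y
    unfolding hline_integral_def using that assms by (intro integral_diff hline_integrable[of S]) auto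
  moreover have "vline_integral (\<lambda>z. Q z - Q' z) x c d =
      vline_integral Q x c d - vline_integral Q' x c d"
    if "x = a \<or> x = b" for x
    unfolding vline_integral_def using that assms by (intro integral_diff vline_integrable[of S]) auto
  ultimately show ?thesis
    unfolding boundary_integral_def by (simp add: algebra_simps)
qed

lemma green_rectangle:
  fixes P :: "complex \<Rightarrow> 'b::banach"
  assumes "closed_form_on P Q U" "\<And>x y. x \<in> {a..b} \<Longrightarrow> y \<in> {c..d} \<Longrightarrow> Complex x y \<in> U"
    and "a \<le> b" "c \<le> d"
  shows "boundary_integral P Q a b c d = 0"
proof -
  obtain Px Py Qx Qy where P: "cont_partials P Px Py U" and Q: "cont_partials Q Qx Qy U"
    and closed: "\<And>z. z \<in> U \<Longrightarrow> Py z = Qx z"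
    using assms(1) unfolding closed_form_on_def by blast
  note inU = assms(2)
  have ftcP: "((\<lambda>y. Py (Complex x y)) has_integral (P (Complex x d) - P (Complex x c))) {c..d}"
    if x: "x \<in> {a..b}" for x
  proof -
    have "((\<lambda>y. P (Complex x y)) has_vector_derivative Py (Complex x y)) (at y within {c..d})"
      if "y \<in> {c..d}" for y
      using cont_partials_vline_derivative[OF P inU[OF x that]]
      by (rule has_vector_derivative_at_within)
    from fundamental_theorem_of_calculus[OF \<open>c \<le> d\<close> this] show ?thesis by simp
  qed
  have ftcQ: "((\<lambda>x. Qx (Complex x y)) has_integral (Q (Complex b y) - Q (Complex a y))) {a..b}"
    if y: "y \<in> {c..d}" for y
  proof -
    have "((\<lambda>x. Q (Complex x y)) has_vector_derivative Qx (Complex x y)) (at x within {a..b})"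
      if "x \<in> {a..b}" for x
      using cont_partials_hline_derivative[OF Q inU[OF that y]]
      by (rule has_vector_derivative_at_within)
    from fundamental_theorem_of_calculus[OF \<open>a \<le> b\<close> this] show ?thesis by simp
  qed
  have "continuous_on (cbox (a, c) (b, d)) (\<lambda>(x, y). Py (Complex x y))"
  proof -
    have "continuous_on (cbox (a, c) (b, d)) (\<lambda>p. Complex (fst p) (snd p))"
      unfolding Complex_eq by (intro continuous_intros)
    moreover have "continuous_on U Py"
      using P unfolding cont_partials_def by blast
    moreover have "(\<lambda>p. Complex (fst p) (snd p)) ` cbox (a, c) (b, d) \<subseteq> U"
      using inU by (auto simp: cbox_Pair_eq)
    ultimately show ?thesis
      unfolding split_beta by (metis (no_types) continuous_on_compose2)
  qed
  note fubini = integral_swap_continuous[OF this]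
  have contP: "continuous_on U P" and contQ: "continuous_on U Q"
    using closed_form_on_continuous[OF assms(1)] by auto
  have "hline_integral P d a b - hline_integral P c a b =
      integral {a..b} (\<lambda>x. P (Complex x d) - P (Complex x c))"
    unfolding hline_integral_def using assms(3,4) inU
    by (intro integral_diff[symmetric] hline_integrable[OF contP]) auto
  also have "\<dots> = integral {a..b} (\<lambda>x. integral {c..d} (\<lambda>y. Py (Complex x y)))"
    by (intro integral_cong integral_unique[symmetric] ftcP)
  also have "\<dots> = integral {c..d} (\<lambda>y. integral {a..b} (\<lambda>x. Py (Complex x y)))"
    using fubini by simp
  also have "\<dots> = integral {c..d} (\<lambda>y. integral {a..b} (\<lambda>x. Qx (Complex x y)))"
    by (intro integral_cong) (simp add: closed inU)
  also have "\<dots> = integral {c..d} (\<lambda>y. Q (Complex b y) - Q (Complex a y))"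
    by (intro integral_cong integral_unique ftcQ)
  also have "\<dots> = vline_integral Q b c d - vline_integral Q a c d"
    unfolding vline_integral_def using assms(3,4) inU
    by (intro integral_diff vline_integrable[OF contQ]) auto
  finally show ?thesis
    unfolding boundary_integral_def by (simp add: algebra_simps)
qed

abbreviation square_boundary_integral ::
  "(complex \<Rightarrow> 'b::banach) \<Rightarrow> (complex \<Rightarrow> 'b) \<Rightarrow> complex \<Rightarrow> real \<Rightarrow> 'b" where
  "square_boundary_integral P Q p r \<equiv> boundary_integral P Q (Re p - r) (Re p + r) (Im p - r) (Im p + r)"

lemma boundary_integral_puncture:
  fixes P :: "complex \<Rightarrow> 'b::banach"
  assumes form: "closed_form_on P Q U"
    and inU: "\<And>x y. x \<in> {a..b} \<Longrightarrow> y \<in> {c..d} \<Longrightarrow> Complex x y \<noteq> p \<Longrightarrow> Complex x y \<in> U"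
    and "0 < r" "a \<le> Re p - r" "Re p + r \<le> b" "c \<le> Im p - r" "Im p + r \<le> d"
  shows "boundary_integral P Q a b c d = square_boundary_integral P Q p r"
proof -
  define x1 x2 y1 y2 where "x1 = Re p - r" "x2 = Re p + r" "y1 = Im p - r" "y2 = Im p + r"
  have bounds: "a \<le> x1" "x1 < Re p" "Re p < x2" "x2 \<le> b" "c \<le> y1" "y1 < Im p" "Im p < y2" "y2 \<le> d"
    using assms(3-) by (auto simp: x1_x2_y1_y2_def)
  have inU': "Complex x y \<in> U" if "x \<in> {a..b}" "y \<in> {c..d}" "x \<noteq> Re p \<or> y \<noteq> Im p" for x y
    using inU that by (auto simp: complex_eq_iff)
  note contP = closed_form_on_continuous(1)[OF form] and contQ = closed_form_on_continuous(2)[OF form]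
  have zero: "boundary_integral P Q a x1 c d = 0" "boundary_integral P Q x2 b c d = 0"
    "boundary_integral P Q x1 x2 c y1 = 0" "boundary_integral P Q x1 x2 y2 d = 0"
    using bounds by (auto intro!: green_rectangle[OF form] inU')
  have "boundary_integral P Q a b c d = boundary_integral P Q a x1 c d + boundary_integral P Q x1 b c d"
    using bounds by (intro boundary_integral_split_x[OF contP] conjI inU') auto
  also have "boundary_integral P Q x1 b c d = boundary_integral P Q x1 x2 c d +
      boundary_integral P Q x2 b c d"
    using bounds by (intro boundary_integral_split_x[OF contP] conjI inU') auto
  also have "boundary_integral P Q x1 x2 c d = boundary_integral P Q x1 x2 c y1 +
      boundary_integral P Q x1 x2 y1 d"
    using bounds by (intro boundary_integral_split_y[OF contQ] conjI inU') auto
  also have "boundary_integral P Q x1 x2 y1 d = boundary_integral P Q x1 x2 y1 y2 +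
      boundary_integral P Q x1 x2 y2 d"
    using bounds by (intro boundary_integral_split_y[OF contQ] conjI inU') auto
  finally show ?thesis
    using zero by (simp add: x1_x2_y1_y2_def)
qed

lemma square_boundary_integral_two_punctures_x:
  fixes P :: "complex \<Rightarrow> 'b::banach"
  assumes form: "closed_form_on P Q (- {p, q})"
    and "0 < r" "Re p + r < Re q - r" "cmod p + r \<le> R" "cmod q + r \<le> R"
  shows "square_boundary_integral P Q 0 R =
    square_boundary_integral P Q p r + square_boundary_integral P Q q r"
proof -
  define m where "m = (Re p + Re q) / 2"
  have m: "Re p + r < m" "m < Re q - r"
    using assms(3) by (auto simp: m_def)
  have "\<bar>Re p\<bar> + r \<le> R" "\<bar>Im p\<bar> + r \<le> R" "\<bar>Re q\<bar> + r \<le> R" "\<bar>Im q\<bar> + r \<le> R"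
    using assms(4,5) abs_Re_le_cmod abs_Im_le_cmod by (smt (verit))+
  then have "square_boundary_integral P Q 0 R = boundary_integral P Q (- R) m (- R) R +
      boundary_integral P Q m R (- R) R"
    and "boundary_integral P Q (- R) m (- R) R = square_boundary_integral P Q p r"
    and "boundary_integral P Q m R (- R) R = square_boundary_integral P Q q r"
    using m \<open>0 < r\<close>
    by (auto intro!: boundary_integral_split_x[OF closed_form_on_continuous(1)[OF form]]
        boundary_integral_puncture[OF form] simp: complex_eq_iff)
  then show ?thesis by simp
qed

lemma square_boundary_integral_two_punctures_y:
  fixes P :: "complex \<Rightarrow> 'b::banach"
  assumes form: "closed_form_on P Q (- {p, q})"
    and "0 < r" "Im p + r < Im q - r" "cmod p + r \<le> R" "cmod q + r \<le> R"
  shows "square_boundary_integral P Q 0 R =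
    square_boundary_integral P Q p r + square_boundary_integral P Q q r"
proof -
  define m where "m = (Im p + Im q) / 2"
  have m: "Im p + r < m" "m < Im q - r"
    using assms(3) by (auto simp: m_def)
  have "\<bar>Re p\<bar> + r \<le> R" "\<bar>Im p\<bar> + r \<le> R" "\<bar>Re q\<bar> + r \<le> R" "\<bar>Im q\<bar> + r \<le> R"
    using assms(4,5) abs_Re_le_cmod abs_Im_le_cmod by (smt (verit))+
  then have "square_boundary_integral P Q 0 R = boundary_integral P Q (- R) R (- R) m +
      boundary_integral P Q (- R) R m R"
    and "boundary_integral P Q (- R) R (- R) m = square_boundary_integral P Q p r"
    and "boundary_integral P Q (- R) R m R = square_boundary_integral P Q q r"
    using m \<open>0 < r\<close>
    by (auto intro!: boundary_integral_split_y[OF closed_form_on_continuous(2)[OF form]]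
        boundary_integral_puncture[OF form] simp: complex_eq_iff)
  then show ?thesis by simp
qed

lemma square_boundary_integral_two_punctures:
  fixes P :: "complex \<Rightarrow> 'b::banach"
  assumes form: "closed_form_on P Q (- {p, q})"
    and "0 < r" "4 * r < cmod (p - q)" "cmod p + r \<le> R" "cmod q + r \<le> R"
  shows "square_boundary_integral P Q 0 R =
    square_boundary_integral P Q p r + square_boundary_integral P Q q r"
proof -
  have form': "closed_form_on P Q (- {q, p})"
    using form by (simp add: insert_commute)
  have "cmod (p - q) \<le> \<bar>Re p - Re q\<bar> + \<bar>Im p - Im q\<bar>"
    using cmod_le[of "p - q"] by simp
  then consider "Re p + r < Re q - r" | "Re q + r < Re p - r"
    | "Im p + r < Im q - r" | "Im q + r < Im p - r"
    using assms(3) by linarith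
  then show ?thesis
  proof cases
    case 1
    then show ?thesis using square_boundary_integral_two_punctures_x[OF form] assms(2,4,5) by blast
  next
    case 2
    then show ?thesis using square_boundary_integral_two_punctures_x[OF form'] assms(2,4,5)
      by (simp add: add.commute)
  next
    case 3
    then show ?thesis using square_boundary_integral_two_punctures_y[OF form] assms(2,4,5) by blast
  next
    case 4
    then show ?thesis using square_boundary_integral_two_punctures_y[OF form'] assms(2,4,5)
      by (simp add: add.commute)
  qed
qed

text \<open>The \<open>j\<close>-component of \<open>\<integral> H dz\<close>, \<open>dz = dx + j dy\<close>, over the boundary of the square with
  centre \<open>p\<close> and half side \<open>r\<close>.\<close>
definition square_integral :: "(complex \<Rightarrow> bicomplex) \<Rightarrow> complex \<Rightarrow> real \<Rightarrow> complex" where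
  "square_integral H p r = square_boundary_integral (\<lambda>z. snd (H z)) (\<lambda>z. fst (H z)) p r"

lemma square_boundary_in_annulus:
  assumes "\<bar>Re z - Re p\<bar> \<le> r" "\<bar>Im z - Im p\<bar> \<le> r" "\<bar>Re z - Re p\<bar> = r \<or> \<bar>Im z - Im p\<bar> = r"
  shows "r \<le> cmod (z - p)" "cmod (z - p) \<le> 2 * r"
  using assms abs_Re_le_cmod[of "z - p"] abs_Im_le_cmod[of "z - p"] cmod_le[of "z - p"] by auto

lemma norm_square_integral_le:
  assumes "0 < r" "\<And>z. r \<le> cmod (z - p) \<Longrightarrow> cmod (z - p) \<le> 2 * r \<Longrightarrow> norm (H z) \<le> K"
  shows "norm (square_integral H p r) \<le> 8 * K * r"
proof -
  have edge: "norm (snd (H z)) \<le> K" "norm (fst (H z)) \<le> K"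
    if "\<bar>Re z - Re p\<bar> \<le> r" "\<bar>Im z - Im p\<bar> \<le> r" "\<bar>Re z - Re p\<bar> = r \<or> \<bar>Im z - Im p\<bar> = r" for z
    using assms(2)[OF square_boundary_in_annulus[OF that]] norm_fst_le_norm norm_snd_le_norm
    by (metis order.trans)+
  have h: "norm (hline_integral (\<lambda>z. snd (H z)) y (Re p - r) (Re p + r)) \<le> K * (2 * r)"
    if "y = Im p - r \<or> y = Im p + r" for y
  proof -
    have "norm (hline_integral (\<lambda>z. snd (H z)) y (Re p - r) (Re p + r)) \<le> K * ((Re p + r) - (Re p - r))"
      unfolding hline_integral_def using assms(1) that by (intro norm_integral_le_const edge) auto
    then show ?thesis by simp
  qed
  have v: "norm (vline_integral (\<lambda>z. fst (H z)) x (Im p - r) (Im p + r)) \<le> K * (2 * r)"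
    if "x = Re p - r \<or> x = Re p + r" for x
  proof -
    have "norm (vline_integral (\<lambda>z. fst (H z)) x (Im p - r) (Im p + r)) \<le> K * ((Im p + r) - (Im p - r))"
      unfolding vline_integral_def using assms(1) that by (intro norm_integral_le_const edge) auto
    then show ?thesis by simp
  qed
  have "norm (square_integral H p r) \<le>
      norm (hline_integral (\<lambda>z. snd (H z)) (Im p - r) (Re p - r) (Re p + r)) +
      norm (vline_integral (\<lambda>z. fst (H z)) (Re p + r) (Im p - r) (Im p + r)) +
      norm (hline_integral (\<lambda>z. snd (H z)) (Im p + r) (Re p - r) (Re p + r)) +
      norm (vline_integral (\<lambda>z. fst (H z)) (Re p - r) (Im p - r) (Im p + r))"
    unfolding square_integral_def boundary_integral_def
    by (intro order.trans[OF norm_triangle_ineq4] add_mono order.refl order.trans[OF norm_triangle_ineq])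
  also have "\<dots> \<le> K * (2 * r) + K * (2 * r) + K * (2 * r) + K * (2 * r)"
    by (intro add_mono h v) simp_all
  finally show ?thesis by simp
qed

lemma square_integral_diff:
  assumes "continuous_on S H" "continuous_on S G" "0 < r"
    and "\<And>z. r \<le> cmod (z - p) \<Longrightarrow> cmod (z - p) \<le> 2 * r \<Longrightarrow> z \<in> S"
  shows "square_integral (\<lambda>z. H z - G z) p r = square_integral H p r - square_integral G p r"
proof -
  have "z \<in> S" if "\<bar>Re z - Re p\<bar> \<le> r" "\<bar>Im z - Im p\<bar> \<le> r" "\<bar>Re z - Re p\<bar> = r \<or> \<bar>Im z - Im p\<bar> = r" for z
    using assms(4) square_boundary_in_annulus[OF that] by blast
  moreover have "(\<lambda>z. snd (H z - G z)) = (\<lambda>z. snd (H z) - snd (G z))"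
    "(\<lambda>z. fst (H z - G z)) = (\<lambda>z. fst (H z) - fst (G z))"
    by auto
  ultimately show ?thesis
    unfolding square_integral_def using assms(3)
    by (simp only:) (rule boundary_integral_diff[of S]; auto intro: continuous_on_fst continuous_on_snd assms(1,2))
qed

lemma arctan_kernel_has_integral:
  assumes "0 < r"
  shows "((\<lambda>x. 2 * r / ((x - q)\<^sup>2 + r\<^sup>2)) has_integral pi) {q - r..q + r}"
proof -
  have "((\<lambda>x. 2 * arctan ((x - q) / r)) has_real_derivative 2 * r / ((x - q)\<^sup>2 + r\<^sup>2)) (at x)" for x
  proof -
    have "((\<lambda>x. 2 * arctan ((x - q) / r)) has_real_derivative 2 * (inverse (1 + ((x - q) / r)\<^sup>2) * (1 / r))) (at x)"
      using assms by (auto intro!: derivative_eq_intros)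
    moreover have "2 * (inverse (1 + ((x - q) / r)\<^sup>2) * (1 / r)) = 2 * r / ((x - q)\<^sup>2 + r\<^sup>2)"
      using assms by (simp add: field_simps power2_eq_square)
    ultimately show ?thesis by simp
  qed
  then have "((\<lambda>x. 2 * r / ((x - q)\<^sup>2 + r\<^sup>2)) has_integral
      2 * arctan ((q + r - q) / r) - 2 * arctan ((q - r - q) / r)) {q - r..q + r}"
    using assms by (intro fundamental_theorem_of_calculus)
      (auto simp flip: has_real_derivative_iff_has_vector_derivative intro: DERIV_subset)
  then show ?thesis
    using assms by (simp add: arctan_minus arctan_one)
qed

lemma square_integral_simple_pole:
  assumes "0 < r"
  shows "square_integral (\<lambda>z. bmult c (bemb (inverse (z - p)))) p r = (2 * pi) *\<^sub>R fst c"
proof -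
  define P where "P z = snd (bmult c (bemb (inverse (z - p))))" for z
  define Q where "Q z = fst (bmult c (bemb (inverse (z - p))))" for z
  have "continuous_on (- {p}) (\<lambda>z. bmult c (bemb (inverse (z - p))))"
    by (intro bmult.continuous_on continuous_on_const continuous_on_compose2[OF continuous_on_bemb]
        continuous_intros) auto
  then have cont: "continuous_on (- {p}) P" "continuous_on (- {p}) Q"
    unfolding P_def Q_def by (auto intro: continuous_on_fst continuous_on_snd)
  have P_jump: "P (Complex x (Im p - r)) - P (Complex x (Im p + r)) =
      (2 * r / ((x - Re p)\<^sup>2 + r\<^sup>2)) *\<^sub>R fst c" for x
  proof -
    have shift: "Complex x (Im p - r) - p = Complex (x - Re p) (- r)"
      "Complex x (Im p + r) - p = Complex (x - Re p) r"
      by (simp_all add: complex_eq_iff)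
    have "(x - Re p)\<^sup>2 + r\<^sup>2 \<noteq> 0" "r\<^sup>2 + (x - Re p)\<^sup>2 \<noteq> 0"
      using assms by (simp_all add: add_nonneg_pos add_pos_nonneg)
    then show ?thesis
      unfolding P_def shift complex_inverse
      by (simp add: bemb_def bmult_def scaleR_conv_of_real field_simps)
  qed
  have Q_jump: "Q (Complex (Re p + r) y) - Q (Complex (Re p - r) y) =
      (2 * r / ((y - Im p)\<^sup>2 + r\<^sup>2)) *\<^sub>R fst c" for y
  proof -
    have shift: "Complex (Re p + r) y - p = Complex r (y - Im p)"
      "Complex (Re p - r) y - p = Complex (- r) (y - Im p)"
      by (simp_all add: complex_eq_iff)
    have "(y - Im p)\<^sup>2 + r\<^sup>2 \<noteq> 0" "r\<^sup>2 + (y - Im p)\<^sup>2 \<noteq> 0"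
      using assms by (simp_all add: add_nonneg_pos add_pos_nonneg)
    then show ?thesis
      unfolding Q_def shift complex_inverse
      by (simp add: bemb_def bmult_def scaleR_conv_of_real field_simps)
  qed
  have "hline_integral P (Im p - r) (Re p - r) (Re p + r) - hline_integral P (Im p + r) (Re p - r) (Re p + r)
      = integral {Re p - r..Re p + r} (\<lambda>x. (2 * r / ((x - Re p)\<^sup>2 + r\<^sup>2)) *\<^sub>R fst c)"
    unfolding hline_integral_def P_jump[symmetric] using assms
    by (intro integral_diff[symmetric] hline_integrable[OF cont(1)]) (auto simp: complex_eq_iff)
  also have "\<dots> = pi *\<^sub>R fst c"
    by (intro integral_unique has_integral_scaleR_left arctan_kernel_has_integral assms)
  finally have horizontal: "hline_integral P (Im p - r) (Re p - r) (Re p + r) -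
    hline_integral P (Im p + r) (Re p - r) (Re p + r) = pi *\<^sub>R fst c" .
  have "vline_integral Q (Re p + r) (Im p - r) (Im p + r) - vline_integral Q (Re p - r) (Im p - r) (Im p + r)
      = integral {Im p - r..Im p + r} (\<lambda>y. (2 * r / ((y - Im p)\<^sup>2 + r\<^sup>2)) *\<^sub>R fst c)"
    unfolding vline_integral_def Q_jump[symmetric] using assms
    by (intro integral_diff[symmetric] vline_integrable[OF cont(2)]) (auto simp: complex_eq_iff)
  also have "\<dots> = pi *\<^sub>R fst c"
    by (intro integral_unique has_integral_scaleR_left arctan_kernel_has_integral assms)
  finally have vertical: "vline_integral Q (Re p + r) (Im p - r) (Im p + r) -
    vline_integral Q (Re p - r) (Im p - r) (Im p + r) = pi *\<^sub>R fst c" .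
  show ?thesis
    using horizontal vertical
    unfolding square_integral_def boundary_integral_def P_def[symmetric] Q_def[symmetric]
    by (simp add: algebra_simps scaleR_conv_of_real)
qed

lemma square_integral_tendsto_0_at_pole:
  assumes "((\<lambda>z. cmod (z - p) * norm (H z)) \<longlongrightarrow> 0) (at p)"
  shows "((\<lambda>r. square_integral H p r) \<longlongrightarrow> 0) (at_right 0)"
proof (rule tendstoI)
  fix \<epsilon> :: real assume "0 < \<epsilon>"
  then have "\<forall>\<^sub>F z in at p. cmod (z - p) * norm (H z) < \<epsilon> / 16"
    using tendstoD[OF assms, of "\<epsilon> / 16"] by (auto elim!: eventually_mono)
  then obtain d where "0 < d" and d: "\<And>z. z \<noteq> p \<Longrightarrow> dist z p < d \<Longrightarrow> cmod (z - p) * norm (H z) < \<epsilon> / 16"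
    unfolding eventually_at by blast
  have "dist (square_integral H p r) 0 < \<epsilon>" if r: "0 < r" "r < d / 2" for r
  proof -
    have "norm (square_integral H p r) \<le> 8 * (\<epsilon> / 16 / r) * r"
    proof (rule norm_square_integral_le[OF r(1)])
      fix z assume z: "r \<le> cmod (z - p)" "cmod (z - p) \<le> 2 * r"
      then have "r * norm (H z) \<le> cmod (z - p) * norm (H z)"
        by (intro mult_right_mono) auto
      also have "\<dots> < \<epsilon> / 16"
        using z r by (intro d) (auto simp: dist_norm)
      finally show "norm (H z) \<le> \<epsilon> / 16 / r"
        using r by (simp add: field_simps)
    qed
    then show ?thesis
      using r \<open>0 < \<epsilon>\<close> by simp
  qed
  then show "\<forall>\<^sub>F r in at_right 0. dist (square_integral H p r) 0 < \<epsilon>"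
    using eventually_at_right_real[of 0 "d / 2"] \<open>0 < d\<close> by (auto elim!: eventually_mono)
qed

lemma square_integral_tendsto_residue:
  assumes "0 < e" "continuous_on (ball p e - {p}) H"
    and "((\<lambda>z. cmod (z - p) * norm (H z - bmult c (bemb (inverse (z - p))))) \<longlongrightarrow> 0) (at p)"
  shows "((\<lambda>r. square_integral H p r) \<longlongrightarrow> (2 * pi) *\<^sub>R fst c) (at_right 0)"
proof -
  define G where "G = (\<lambda>z. bmult c (bemb (inverse (z - p))))"
  have "continuous_on (ball p e - {p}) G"
    unfolding G_def by (intro bmult.continuous_on continuous_on_const
        continuous_on_compose2[OF continuous_on_bemb] continuous_intros) auto
  then have "square_integral (\<lambda>z. H z - G z) p r + (2 * pi) *\<^sub>R fst c = square_integral H p r"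
    if "0 < r" "r < e / 2" for r
    using that assms(2) square_integral_simple_pole[of r c p]
    by (subst square_integral_diff[of "ball p e - {p}"]) (auto simp: G_def dist_norm norm_minus_commute)
  then have "\<forall>\<^sub>F r in at_right 0. square_integral (\<lambda>z. H z - G z) p r + (2 * pi) *\<^sub>R fst c =
      square_integral H p r"
    using eventually_at_right_real[of 0 "e / 2"] assms(1) by (auto elim!: eventually_mono)
  moreover have "((\<lambda>r. square_integral (\<lambda>z. H z - G z) p r + (2 * pi) *\<^sub>R fst c) \<longlongrightarrow> 0 + (2 * pi) *\<^sub>R fst c) (at_right 0)"
    using assms(3) unfolding G_def by (intro tendsto_add square_integral_tendsto_0_at_pole tendsto_const)
  ultimately show ?thesis
    by (auto intro: Lim_transform_eventually)
qed

lemma square_integral_tendsto_0_at_infinity: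
  assumes "\<exists>R M. \<forall>z. R \<le> cmod z \<longrightarrow> (cmod z)\<^sup>2 * norm (H z) \<le> M"
  shows "((\<lambda>R. square_integral H 0 R) \<longlongrightarrow> 0) at_top"
proof -
  obtain R0 M where bound: "\<And>z. R0 \<le> cmod z \<Longrightarrow> (cmod z)\<^sup>2 * norm (H z) \<le> M"
    using assms by blast
  have bound_R: "norm (square_integral H 0 R) \<le> 8 * M * inverse R" if R: "max R0 1 \<le> R" for R
  proof -
    have "norm (square_integral H 0 R) \<le> 8 * (M / R\<^sup>2) * R"
    proof (rule norm_square_integral_le)
      fix z assume z: "R \<le> cmod (z - 0)"
      then have "R\<^sup>2 * norm (H z) \<le> (cmod z)\<^sup>2 * norm (H z)"
        using R by (intro mult_right_mono power_mono) auto
      also have "\<dots> \<le> M"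
        using z R by (intro bound) auto
      finally show "norm (H z) \<le> M / R\<^sup>2"
        using R by (simp add: field_simps)
    qed (use R in auto)
    then show ?thesis
      using R by (simp add: power2_eq_square field_simps)
  qed
  have "\<forall>\<^sub>F R in at_top. norm (square_integral H 0 R) \<le> 8 * M * inverse R"
    using eventually_ge_at_top[of "max R0 1"] by (rule eventually_mono) (rule bound_R)
  moreover have "((\<lambda>R. 8 * M * inverse R) \<longlongrightarrow> 0) at_top"
    by (intro tendsto_mult_right_zero tendsto_inverse_0_at_top filterlim_ident)
  ultimately show ?thesis
    by (rule Lim_null_comparison)
qed

lemma square_integrals_around_poles_cancel:
  assumes form: "closed_form_on (\<lambda>z. snd (H z)) (\<lambda>z. fst (H z)) (- {p, q})"
    and "((\<lambda>R. square_integral H 0 R) \<longlongrightarrow> 0) at_top" "0 < r" "4 * r < cmod (p - q)"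
  shows "square_integral H p r + square_integral H q r = 0"
proof -
  have two_poles: "square_integral H 0 R = square_integral H p r + square_integral H q r"
    if "cmod p + cmod q + r \<le> R" for R
    unfolding square_integral_def using that assms(3,4)
    by (intro square_boundary_integral_two_punctures[OF form])
       (use norm_ge_zero[of p] norm_ge_zero[of q] in linarith)+
  have "\<forall>\<^sub>F R in at_top. square_integral H 0 R = square_integral H p r + square_integral H q r"
    using eventually_ge_at_top[of "cmod p + cmod q + r"] by (rule eventually_mono) (rule two_poles)
  from tendsto_unique[OF _ tendsto_eventually[OF this] assms(2)] show ?thesis
    by simp
qed

lemma cmod_mult_norm_bmult_tendsto_0:
  assumes "((\<lambda>z. bmult (bemb (z - p)) (D z)) \<longlongrightarrow> 0) (at p)" "isCont V p"
  shows "((\<lambda>z. cmod (z - p) * norm (bmult (D z) (V z))) \<longlongrightarrow> 0) (at p)"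
proof (rule Lim_null_comparison)
  show "\<forall>\<^sub>F z in at p. norm (cmod (z - p) * norm (bmult (D z) (V z))) \<le>
      16 * norm (V z) * norm (bmult (bemb (z - p)) (D z))"
    using cmod_mult_norm_bmult_le by (simp add: bmult_commute[of "D _"])
  have "((\<lambda>z. 16 * norm (V z) * norm (bmult (bemb (z - p)) (D z))) \<longlongrightarrow> 16 * norm (V p) * norm (0::bicomplex)) (at p)"
    using assms unfolding isCont_def by (intro tendsto_intros)
  then show "((\<lambda>z. 16 * norm (V z) * norm (bmult (bemb (z - p)) (D z))) \<longlongrightarrow> 0) (at p)"
    by simp
qed

lemma residue_remainder_tendsto_0:
  assumes "isCont D p" "((\<lambda>z. bmult (bemb (z - p)) (V z)) \<longlongrightarrow> \<alpha>) (at p)"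
  shows "((\<lambda>z. cmod (z - p) * norm (bmult (D z) (V z) - bmult (bmult (D p) \<alpha>) (bemb (inverse (z - p)))))
    \<longlongrightarrow> 0) (at p)"
proof (rule Lim_null_comparison)
  define Y where "Y z = bmult (bemb (z - p)) (V z)" for z
  have "norm (cmod (z - p) * norm (bmult (D z) (V z) - bmult (bmult (D p) \<alpha>) (bemb (inverse (z - p))))) \<le>
      16 * norm (D z - D p) * norm (Y z) + 16 * norm (D p) * norm (Y z - \<alpha>)" if "z \<noteq> p" for z
  proof -
    let ?w = "z - p"
    have "bmult (D z) (V z) - bmult (bmult (D p) \<alpha>) (bemb (inverse ?w)) =
        bmult (D z - D p) (V z) + bmult (D p) (bmult (bemb (inverse ?w)) (Y z - \<alpha>))"
      using that by (simp add: Y_def bmult.diff_left bmult.diff_right bmult_bemb_inverse_cancel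
          bmult_assoc bmult_commute[of \<alpha>])
    then have "cmod ?w * norm (bmult (D z) (V z) - bmult (bmult (D p) \<alpha>) (bemb (inverse ?w))) \<le>
        cmod ?w * norm (bmult (D z - D p) (V z)) + cmod ?w * norm (bmult (D p) (bmult (bemb (inverse ?w)) (Y z - \<alpha>)))"
      by (simp flip: distrib_left add: mult_left_mono norm_triangle_ineq)
    also have "cmod ?w * norm (bmult (D z - D p) (V z)) \<le> 16 * norm (D z - D p) * norm (Y z)"
      unfolding Y_def by (rule cmod_mult_norm_bmult_le)
    also have "cmod ?w * norm (bmult (D p) (bmult (bemb (inverse ?w)) (Y z - \<alpha>))) \<le>
        4 * norm (D p) * (cmod ?w * norm (bmult (bemb (inverse ?w)) (Y z - \<alpha>)))"
      using mult_left_mono[OF norm_bmult_le[of "D p" "bmult (bemb (inverse ?w)) (Y z - \<alpha>)"], of "cmod ?w"]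
      by (simp add: mult_ac)
    also have "\<dots> \<le> 4 * norm (D p) * (4 * norm (Y z - \<alpha>))"
      by (intro mult_left_mono cmod_mult_norm_bmult_bemb_inverse_le) simp
    finally show ?thesis by simp
  qed
  then show "\<forall>\<^sub>F z in at p. norm (cmod (z - p) * norm (bmult (D z) (V z) - bmult (bmult (D p) \<alpha>) (bemb (inverse (z - p))))) \<le>
      16 * norm (D z - D p) * norm (Y z) + 16 * norm (D p) * norm (Y z - \<alpha>)"
    by (auto simp: eventually_at_filter)
  have "((\<lambda>z. 16 * norm (D z - D p) * norm (Y z) + 16 * norm (D p) * norm (Y z - \<alpha>)) \<longlongrightarrow>
      16 * norm (D p - D p) * norm \<alpha> + 16 * norm (D p) * norm (\<alpha> - \<alpha>)) (at p)"
    using assms unfolding isCont_def Y_def by (intro tendsto_intros)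
  then show "((\<lambda>z. 16 * norm (D z - D p) * norm (Y z) + 16 * norm (D p) * norm (Y z - \<alpha>)) \<longlongrightarrow> 0) (at p)"
    by simp
qed

section \<open>Solutions and the adjoint equation\<close>

lemma is_solution_continuous: "is_solution a b W S \<Longrightarrow> open S \<Longrightarrow> continuous_on S W"
  unfolding is_solution_def has_cont_partials_iff_cont_partials
  by (blast intro: cont_partials_imp_continuous)

lemma is_solution_diff:
  assumes "is_solution a b W S" "is_solution a b W' S"
  shows "is_solution a b (\<lambda>z. W z - W' z) S"
proof -
  obtain Wx Wy Wx' Wy' where partials: "cont_partials W Wx Wy S" "cont_partials W' Wx' Wy' S"
    and eq: "\<And>z. z \<in> S \<Longrightarrow>
        (1/2::real) *\<^sub>R (Wx z + bmult bj (Wy z)) = bmult (a z) (W z) + bmult (b z) (bcnj (W z))"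
      "\<And>z. z \<in> S \<Longrightarrow>
        (1/2::real) *\<^sub>R (Wx' z + bmult bj (Wy' z)) = bmult (a z) (W' z) + bmult (b z) (bcnj (W' z))"
    using assms unfolding is_solution_def has_cont_partials_iff_cont_partials by metis
  have "(1/2::real) *\<^sub>R ((Wx z - Wx' z) + bmult bj (Wy z - Wy' z)) =
      bmult (a z) (W z - W' z) + bmult (b z) (bcnj (W z - W' z))" if "z \<in> S" for z
  proof -
    have "(1/2::real) *\<^sub>R ((Wx z - Wx' z) + bmult bj (Wy z - Wy' z)) =
        (1/2::real) *\<^sub>R (Wx z + bmult bj (Wy z)) - (1/2::real) *\<^sub>R (Wx' z + bmult bj (Wy' z))"
      by (simp add: bmult.diff_right algebra_simps)
    then show ?thesis
      using eq[OF that] by (simp add: bmult.diff_right bcnj_diff)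
  qed
  with cont_partials_diff[OF partials] show ?thesis
    unfolding is_solution_def has_cont_partials_iff_cont_partials by blast
qed

text \<open>Pointwise, \<open>\<partial>_{\<bar>z} (D V) = b \<bar>D V - \<bar>(b \<bar>D V)\<close> has vanishing \<open>C_i\<close>-component:
  this is the closedness of the \<open>j\<close>-part of \<open>D V dz\<close>.\<close>
lemma adjoint_pair_closedness:
  assumes "(1/2::real) *\<^sub>R (Dx + bmult bj Dy) = bmult a D + bmult b (bcnj D)"
    and "(1/2::real) *\<^sub>R (Vx + bmult bj Vy) = bmult (- a) V + bmult (- bcnj b) (bcnj V)"
  shows "snd (bmult D Vy + bmult Dy V) = fst (bmult D Vx + bmult Dx V)"
proof -
  have "Dx + bmult bj Dy = 2 *\<^sub>R (bmult a D + bmult b (bcnj D))"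
    "Vx + bmult bj Vy = 2 *\<^sub>R (bmult (- a) V + bmult (- bcnj b) (bcnj V))"
    using arg_cong[OF assms(1), of "scaleR 2"] arg_cong[OF assms(2), of "scaleR 2"] by simp_all
  moreover have "fst (bmult D Vx + bmult Dx V) - snd (bmult D Vy + bmult Dy V) =
      fst (bmult D (Vx + bmult bj Vy) + bmult (Dx + bmult bj Dy) V)"
    by (simp add: bmult_def bj_def algebra_simps)
  ultimately have "fst (bmult D Vx + bmult Dx V) - snd (bmult D Vy + bmult Dy V) = 0"
    by (simp add: bmult_def bcnj_def algebra_simps scaleR_conv_of_real)
  then show ?thesis by simp
qed

lemma adjoint_pair_closed_form:
  assumes "is_solution a b D S" "is_solution (\<lambda>z. - a z) (\<lambda>z. - bcnj (b z)) V T" "open S" "open T"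
  shows "closed_form_on (\<lambda>z. snd (bmult (D z) (V z))) (\<lambda>z. fst (bmult (D z) (V z))) (S \<inter> T)"
proof -
  obtain Dx Dy Vx Vy where D: "cont_partials D Dx Dy S" and V: "cont_partials V Vx Vy T"
    and eqD: "\<And>z. z \<in> S \<Longrightarrow>
      (1/2::real) *\<^sub>R (Dx z + bmult bj (Dy z)) = bmult (a z) (D z) + bmult (b z) (bcnj (D z))"
    and eqV: "\<And>z. z \<in> T \<Longrightarrow> (1/2::real) *\<^sub>R (Vx z + bmult bj (Vy z)) =
      bmult (- a z) (V z) + bmult (- bcnj (b z)) (bcnj (V z))"
    using assms(1,2) unfolding is_solution_def has_cont_partials_iff_cont_partials by metis
  have "cont_partials (\<lambda>z. bmult (D z) (V z)) (\<lambda>z. bmult (D z) (Vx z) + bmult (Dx z) (V z))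
      (\<lambda>z. bmult (D z) (Vy z) + bmult (Dy z) (V z)) (S \<inter> T)"
    using continuous_on_subset[OF is_solution_continuous[OF assms(1,3)], of "S \<inter> T"]
      continuous_on_subset[OF is_solution_continuous[OF assms(2,4)], of "S \<inter> T"]
    by (intro cont_partials_bmult cont_partials_subset[OF D] cont_partials_subset[OF V]) auto
  from cont_partials_bounded_linear[OF bounded_linear_snd this]
    cont_partials_bounded_linear[OF bounded_linear_fst this]
  show ?thesis
    using assms(3,4) adjoint_pair_closedness[OF eqD eqV] unfolding closed_form_on_def by blast
qed

lemma big_O_inv_imp_norm_bound:
  assumes "big_O_inv W"
  shows "\<exists>R M. \<forall>z. R \<le> cmod z \<longrightarrow> cmod z * norm (W z) \<le> M"
proof -
  obtain R M where "\<And>z. R \<le> cmod z \<Longrightarrow> cmod z * bnorm (W z) \<le> M"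
    using assms unfolding big_O_inv_def by blast
  then have "cmod z * norm (W z) \<le> 2 * M" if "R \<le> cmod z" for z
    using mult_left_mono[OF norm_le_bnorm[of "W z"], of "cmod z"] that by fastforce
  then show ?thesis by blast
qed

lemma big_O_inv_diff_norm_bound:
  assumes "big_O_inv W" "big_O_inv W'"
  shows "\<exists>R M. \<forall>z. R \<le> cmod z \<longrightarrow> cmod z * norm (W z - W' z) \<le> M"
proof -
  obtain R M R' M' where "\<And>z. R \<le> cmod z \<Longrightarrow> cmod z * norm (W z) \<le> M"
    and "\<And>z. R' \<le> cmod z \<Longrightarrow> cmod z * norm (W' z) \<le> M'"
    using big_O_inv_imp_norm_bound[OF assms(1)] big_O_inv_imp_norm_bound[OF assms(2)] by metis
  moreover have "cmod z * norm (W z - W' z) \<le> cmod z * norm (W z) + cmod z * norm (W' z)" for z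
    using mult_left_mono[OF norm_triangle_ineq4[of "W z" "W' z"], of "cmod z"]
    by (simp add: distrib_left)
  ultimately have "cmod z * norm (W z - W' z) \<le> M + M'" if "max R R' \<le> cmod z" for z
    using that by (smt (verit) max.bounded_iff)
  then show ?thesis by blast
qed

lemma bmult_norm_bound_at_infinity:
  assumes "\<exists>R M. \<forall>z. R \<le> cmod z \<longrightarrow> cmod z * norm (D z) \<le> M"
    and "\<exists>R M. \<forall>z. R \<le> cmod z \<longrightarrow> cmod z * norm (V z) \<le> M"
  shows "\<exists>R M. \<forall>z. R \<le> cmod z \<longrightarrow> (cmod z)\<^sup>2 * norm (bmult (D z) (V z)) \<le> M"
proof -
  obtain R M R' M' where D: "\<And>z. R \<le> cmod z \<Longrightarrow> cmod z * norm (D z) \<le> M"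
    and V: "\<And>z. R' \<le> cmod z \<Longrightarrow> cmod z * norm (V z) \<le> M'"
    using assms by metis
  have "(cmod z)\<^sup>2 * norm (bmult (D z) (V z)) \<le> 4 * M * M'" if "max R R' \<le> cmod z" for z
  proof -
    have "(cmod z)\<^sup>2 * norm (bmult (D z) (V z)) \<le> (cmod z)\<^sup>2 * (4 * norm (D z) * norm (V z))"
      by (intro mult_left_mono norm_bmult_le) simp
    also have "\<dots> = 4 * (cmod z * norm (D z)) * (cmod z * norm (V z))"
      by (simp add: power2_eq_square mult_ac)
    also have "\<dots> \<le> 4 * M * M'"
    proof -
      have "cmod z * norm (D z) \<le> M" "cmod z * norm (V z) \<le> M'"
        using D V that by auto
      moreover have "0 \<le> cmod z * norm (D z)" "0 \<le> cmod z * norm (V z)"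
        by simp_all
      ultimately have "(cmod z * norm (D z)) * (cmod z * norm (V z)) \<le> M * M'"
        by (meson mult_mono order.trans)
      then show ?thesis
        by (simp add: mult.assoc)
    qed
    finally show ?thesis .
  qed
  then show ?thesis by blast
qed

section \<open>Uniqueness of decaying kernels\<close>

lemma adjoint_pairing_vanishes:
  assumes solD: "is_solution a b D (- {p})"
    and limD: "((\<lambda>z. bmult (bemb (z - p)) (D z)) \<longlongrightarrow> 0) (at p)"
    and decayD: "\<exists>R M. \<forall>z. R \<le> cmod z \<longrightarrow> cmod z * norm (D z) \<le> M"
    and solV: "is_solution (\<lambda>z. - a z) (\<lambda>z. - bcnj (b z)) V (- {q})"
    and limV: "((\<lambda>z. bmult (bemb (z - q)) (V z)) \<longlongrightarrow> \<alpha>) (at q)"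
    and decayV: "\<exists>R M. \<forall>z. R \<le> cmod z \<longrightarrow> cmod z * norm (V z) \<le> M"
    and "p \<noteq> q"
  shows "fst (bmult (D q) \<alpha>) = 0"
proof -
  define H where "H z = bmult (D z) (V z)" for z
  define L where "L = (2 * pi) *\<^sub>R fst (bmult (D q) \<alpha>)"
  have "- {p} \<inter> - {q} = - {p, q}"
    by auto
  then have form: "closed_form_on (\<lambda>z. snd (H z)) (\<lambda>z. fst (H z)) (- {p, q})"
    using adjoint_pair_closed_form[OF solD solV open_Compl open_Compl] unfolding H_def by simp
  have contD: "continuous_on (- {p}) D" and contV: "continuous_on (- {q}) V"
    using is_solution_continuous solD solV by blast+
  have "((\<lambda>r. square_integral H p r) \<longlongrightarrow> 0) (at_right 0)"
    using contV \<open>p \<noteq> q\<close> unfolding H_def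
    by (intro square_integral_tendsto_0_at_pole cmod_mult_norm_bmult_tendsto_0 limD)
       (simp add: continuous_on_eq_continuous_at open_Compl)
  moreover have "((\<lambda>r. square_integral H q r) \<longlongrightarrow> L) (at_right 0)"
    unfolding L_def
  proof (rule square_integral_tendsto_residue)
    show "0 < cmod (p - q)" "continuous_on (ball q (cmod (p - q)) - {q}) H"
      using \<open>p \<noteq> q\<close> unfolding H_def
      by (auto intro!: bmult.continuous_on continuous_on_subset[OF contD] continuous_on_subset[OF contV]
          simp: dist_norm norm_minus_commute)
    show "((\<lambda>z. cmod (z - q) * norm (H z - bmult (bmult (D q) \<alpha>) (bemb (inverse (z - q))))) \<longlongrightarrow> 0) (at q)"
      using contD \<open>p \<noteq> q\<close> unfolding H_def
      by (intro residue_remainder_tendsto_0 limV) (simp add: continuous_on_eq_continuous_at open_Compl)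
  qed
  ultimately have sum_limit: "((\<lambda>r. square_integral H p r + square_integral H q r) \<longlongrightarrow> 0 + L) (at_right 0)"
    by (rule tendsto_add)
  have infinity: "((\<lambda>R. square_integral H 0 R) \<longlongrightarrow> 0) at_top"
    unfolding H_def by (intro square_integral_tendsto_0_at_infinity bmult_norm_bound_at_infinity decayD decayV)
  have "square_integral H p r + square_integral H q r = 0" if "0 < r" "4 * r < cmod (p - q)" for r
    using form infinity that by (rule square_integrals_around_poles_cancel)
  then have sum_zero: "\<forall>\<^sub>F r in at_right 0. square_integral H p r + square_integral H q r = 0"
    using eventually_at_right_real[of 0 "cmod (p - q) / 4"] \<open>p \<noteq> q\<close> by (auto elim!: eventually_mono)
  then have "L = 0"
    using tendsto_unique[OF _ tendsto_eventually[OF sum_zero] sum_limit] by simp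
  then show ?thesis
    by (simp add: L_def)
qed

lemma same_pole_solutions_eq:
  assumes "is_solution a b K (- {p})" "is_solution a b K' (- {p})"
    and "((\<lambda>z. bmult (bemb (z - p)) (K z)) \<longlongrightarrow> \<beta>) (at p)"
    and "((\<lambda>z. bmult (bemb (z - p)) (K' z)) \<longlongrightarrow> \<beta>) (at p)"
    and "big_O_inv K" "big_O_inv K'"
    and "decaying_kernel (\<lambda>z. - a z) (\<lambda>z. - bcnj (b z)) V1 Vj" "z \<noteq> p"
  shows "K z = K' z"
proof -
  define D where "D w = K w - K' w" for w
  have solD: "is_solution a b D (- {p})"
    unfolding D_def using assms(1,2) by (rule is_solution_diff)
  have limD: "((\<lambda>w. bmult (bemb (w - p)) (D w)) \<longlongrightarrow> 0) (at p)"
    using tendsto_diff[OF assms(3,4)] by (simp add: D_def bmult.diff_right)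
  have decayD: "\<exists>R M. \<forall>w. R \<le> cmod w \<longrightarrow> cmod w * norm (D w) \<le> M"
    unfolding D_def using assms(5,6) by (rule big_O_inv_diff_norm_bound)
  have "fst (bmult (D z) \<alpha>) = 0" if "\<alpha> \<in> {bone, bj}" for \<alpha>
  proof -
    have kernel: "cauchy_kernel (\<lambda>z. - a z) (\<lambda>z. - bcnj (b z)) V1 Vj"
      "big_O_inv (V1 z)" "big_O_inv (Vj z)"
      using assms(7) unfolding decaying_kernel_def by auto
    obtain V where V: "is_solution (\<lambda>z. - a z) (\<lambda>z. - bcnj (b z)) V (- {z})"
      "((\<lambda>w. bmult (bemb (w - z)) (V w)) \<longlongrightarrow> \<alpha>) (at z)" "big_O_inv V"
    proof (cases "\<alpha> = bone")
      case True
      then show ?thesis using that kernel unfolding cauchy_kernel_def by blast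
    next
      case False
      then have "\<alpha> = bj" using \<open>\<alpha> \<in> {bone, bj}\<close> by simp
      then show ?thesis using that kernel unfolding cauchy_kernel_def by blast
    qed
    from assms(8) show ?thesis
      by (intro adjoint_pairing_vanishes[OF solD limD decayD V(1,2) big_O_inv_imp_norm_bound[OF V(3)]]) simp
  qed
  from this[of bone] this[of bj] have "D z = 0"
    by (simp add: bmult_def bone_def bj_def prod_eq_iff)
  then show ?thesis
    by (simp add: D_def)
qed

lemma decaying_kernel_unique:
  assumes "decaying_kernel a b Z1 Zj" "decaying_kernel a b Z1' Zj'"
    and "decaying_kernel (\<lambda>z. - a z) (\<lambda>z. - bcnj (b z)) V1 Vj" "z \<noteq> z0"
  shows "Z1 z0 z = Z1' z0 z \<and> Zj z0 z = Zj' z0 z"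
proof -
  have Z: "is_solution a b (Z1 z0) (- {z0})" "is_solution a b (Zj z0) (- {z0})"
    "((\<lambda>w. bmult (bemb (w - z0)) (Z1 z0 w)) \<longlongrightarrow> bone) (at z0)"
    "((\<lambda>w. bmult (bemb (w - z0)) (Zj z0 w)) \<longlongrightarrow> bj) (at z0)"
    "big_O_inv (Z1 z0)" "big_O_inv (Zj z0)"
    and Z': "is_solution a b (Z1' z0) (- {z0})" "is_solution a b (Zj' z0) (- {z0})"
    "((\<lambda>w. bmult (bemb (w - z0)) (Z1' z0 w)) \<longlongrightarrow> bone) (at z0)"
    "((\<lambda>w. bmult (bemb (w - z0)) (Zj' z0 w)) \<longlongrightarrow> bj) (at z0)"
    "big_O_inv (Z1' z0)" "big_O_inv (Zj' z0)"
    using assms(1,2) unfolding decaying_kernel_def cauchy_kernel_def by blast+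
  show ?thesis
    using same_pole_solutions_eq[OF Z(1) Z'(1) Z(3) Z'(3) Z(5) Z'(5) assms(3,4)]
      same_pole_solutions_eq[OF Z(2) Z'(2) Z(4) Z'(4) Z(6) Z'(6) assms(3,4)] ..
qed

theorem mainTheorem5:
  fixes a b :: "complex \<Rightarrow> bicomplex"
  assumes "hoelder_continuous a" and "hoelder_continuous b"
    and "\<exists>Z1 Zj. decaying_kernel a b Z1 Zj"
    and "\<exists>Z1 Zj. decaying_kernel (\<lambda>z. - a z) (\<lambda>z. - bcnj (b z)) Z1 Zj"
  shows "(\<forall>Z1 Zj Z1' Zj'. decaying_kernel a b Z1 Zj \<and> decaying_kernel a b Z1' Zj' \<longrightarrow>
            (\<forall>z0 z. z \<noteq> z0 \<longrightarrow> Z1 z0 z = Z1' z0 z \<and> Zj z0 z = Zj' z0 z))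
       \<and> (\<forall>V1 Vj V1' Vj'. decaying_kernel (\<lambda>z. - a z) (\<lambda>z. - bcnj (b z)) V1 Vj \<and>
                         decaying_kernel (\<lambda>z. - a z) (\<lambda>z. - bcnj (b z)) V1' Vj' \<longrightarrow>
            (\<forall>z0 z. z \<noteq> z0 \<longrightarrow> V1 z0 z = V1' z0 z \<and> Vj z0 z = Vj' z0 z))"
proof -
  \<comment> \<open>The Hoelder hypotheses matter only for the existence of kernels, not for their uniqueness.\<close>
  obtain V1 Vj where adjoint_kernel: "decaying_kernel (\<lambda>z. - a z) (\<lambda>z. - bcnj (b z)) V1 Vj"
    using assms(4) by blast
  obtain Z1 Zj where "decaying_kernel a b Z1 Zj"
    using assms(3) by blast
  moreover have "(\<lambda>z. - (- a z)) = a" "(\<lambda>z. - bcnj (- bcnj (b z))) = b"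
    by (simp_all add: bcnj_def)
  ultimately have kernel: "decaying_kernel (\<lambda>z. - (- a z)) (\<lambda>z. - bcnj (- bcnj (b z))) Z1 Zj"
    by simp
  show ?thesis
    using decaying_kernel_unique[OF _ _ adjoint_kernel] decaying_kernel_unique[OF _ _ kernel] by blast
qed

end
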